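(* Let $\mathcal{H}^c_{B_n}$ be the degenerate affine Hecke–Clifford algebra of type $B_n$, $n\ge2$. Let $w\in W_{B_n}$ have signed cycle type $(\lambda,\mu)$. If it is not the case that all parts of $\lambda$ are odd and all parts of $\mu$ are even, then $w\in[\mathcal{H}^c_{B_n},\mathcal{H}^c_{B_n}]$.
   Context: $W_{B_n}$ is the group of signed permutations of $\{1,\dots,n\}$, generated by $s_i=(i,i+1)$ ($1\le i\le n-1$) and the sign change $s_n$ of $n$. The signed cycle type of $w$ is the pair $(\lambda,\mu)$ where $\lambda$ (resp. $\mu$) lists the lengths of the cycles of the underlying permutation along which $w$ makes an even (resp. odd) number of sign changes. With parameters $u,v\in\mathbb{C}$, $\mathcal{H}^c_{B_n}$ is generated by commuting $x_1,\dots,x_n$, Clifford generators $c_1,\dots,c_n$ ($c_i^2=1$, $c_ic_j=-c_jc_i$, $i\ne j$) and $W_{B_n}$, with $\mathbb{C}[x]$, the Clifford algebra and $\mathbb{C}W_{B_n}$ subalgebras and relations $x_ic_i=-c_ix_i$, $x_ic_j=c_jx_i$ ($i\ne j$), $\sigma c_i=c_{\sigma(i)}\sigma$ for $\sigma\in\langle s_1,\dots,s_{n-1}\rangle$, $x_{i+1}s_i-s_ix_i=u(1-c_{i+1}c_i)$, $x_js_i=s_ix_j$ ($j\ne i,i+1$) for $i<n$, and $s_nc_n=-c_ns_n$, $s_nc_i=c_is_n$ ($i\ne n$), $s_nx_n+x_ns_n=-\sqrt2 v$, $s_nx_i=x_is_n$ ($i\ne n$). $[H,H]$ is the linear span of all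 $hh'-h'h$. *)

theory Defs
  imports Complex_Main "HOL-Library.Multiset"
begin

datatype gen = X nat | Cl nat | S nat

type_synonym fa = "gen list \<Rightarrow> complex"

definition valid_gen :: "nat \<Rightarrow> gen \<Rightarrow> bool" where
  "valid_gen n g = (case g of X i \<Rightarrow> 1 \<le> i \<and> i \<le> n | Cl i \<Rightarrow> 1 \<le> i \<and> i \<le> n
                              | S i \<Rightarrow> 1 \<le> i \<and> i \<le> n)"

definition valid_word :: "nat \<Rightarrow> gen list \<Rightarrow> bool" where
  "valid_word n ws = (\<forall>g\<in>set ws. valid_gen n g)"

definition in_free :: "nat \<Rightarrow> fa \<Rightarrow> bool" where
  "in_free n f = (finite {w. f w \<noteq> 0} \<and> (\<forall>w. f w \<noteq> 0 \<longrightarrow> valid_word n w))"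

definition mono :: "gen list \<Rightarrow> fa" where
  "mono w = (\<lambda>v. if v = w then 1 else 0)"

definition fmul :: "fa \<Rightarrow> fa \<Rightarrow> fa" where
  "fmul f g = (\<lambda>w. \<Sum>i = 0..length w. f (take i w) * g (drop i w))"

definition lincomb :: "(complex \<times> gen list) list \<Rightarrow> fa" where
  "lincomb l = (\<lambda>w. \<Sum>(c, v)\<leftarrow>l. if v = w then c else 0)"

inductive_set lspan :: "fa set \<Rightarrow> fa set" for A :: "fa set" where
  zero: "(\<lambda>_. 0) \<in> lspan A"
| step: "x \<in> A \<Longrightarrow> y \<in> lspan A \<Longrightarrow> (\<lambda>w. c * x w + y w) \<in> lspan A"

text \<open>Each relation lhs = rhs is encoded as the element lhs - rhs.\<close>
definition rels :: "nat \<Rightarrow> complex \<Rightarrow> complex \<Rightarrow> fa set" where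
  "rels n u v =
     \<comment> \<open>polynomial algebra C[x]\<close>
     {lincomb [(1, [X i, X j]), (-1, [X j, X i])] | i j. i \<in> {1..n} \<and> j \<in> {1..n}}
   \<union> \<comment> \<open>Clifford algebra\<close>
     {lincomb [(1, [Cl i, Cl i]), (-1, [])] | i. i \<in> {1..n}}
   \<union> {lincomb [(1, [Cl i, Cl j]), (1, [Cl j, Cl i])] | i j. i \<in> {1..n} \<and> j \<in> {1..n} \<and> i \<noteq> j}
   \<union> \<comment> \<open>Coxeter presentation of W(B_n)\<close>
     {lincomb [(1, [S i, S i]), (-1, [])] | i. i \<in> {1..n}}
   \<union> {lincomb [(1, [S i, S (Suc i), S i]), (-1, [S (Suc i), S i, S (Suc i)])] | i. 1 \<le> i \<and> i + 2 \<le> n}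
   \<union> {lincomb [(1, [S i, S j]), (-1, [S j, S i])] | i j. i \<in> {1..n} \<and> j \<in> {1..n} \<and> (i + 2 \<le> j \<or> j + 2 \<le> i)}
   \<union> {lincomb [(1, [S (n-1), S n, S (n-1), S n]), (-1, [S n, S (n-1), S n, S (n-1)])]}
   \<union> \<comment> \<open>mixed relations x / c\<close>
     {lincomb [(1, [X i, Cl i]), (1, [Cl i, X i])] | i. i \<in> {1..n}}
   \<union> {lincomb [(1, [X i, Cl j]), (-1, [Cl j, X i])] | i j. i \<in> {1..n} \<and> j \<in> {1..n} \<and> i \<noteq> j}
   \<union> \<comment> \<open>sigma c_i = c_sigma(i) sigma, for the generators s_i, i < n, of S_n\<close>
     {lincomb [(1, [S i, Cl i]), (-1, [Cl (Suc i), S i])] | i. 1 \<le> i \<and> i < n}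
   \<union> {lincomb [(1, [S i, Cl (Suc i)]), (-1, [Cl i, S i])] | i. 1 \<le> i \<and> i < n}
   \<union> {lincomb [(1, [S i, Cl j]), (-1, [Cl j, S i])] | i j. 1 \<le> i \<and> i < n \<and> j \<in> {1..n} \<and> j \<noteq> i \<and> j \<noteq> Suc i}
   \<union> \<comment> \<open>x_{i+1} s_i - s_i x_i = u (1 - c_{i+1} c_i)\<close>
     {lincomb [(1, [X (Suc i), S i]), (-1, [S i, X i]), (-u, []), (u, [Cl (Suc i), Cl i])] | i. 1 \<le> i \<and> i < n}
   \<union> {lincomb [(1, [X j, S i]), (-1, [S i, X j])] | i j. 1 \<le> i \<and> i < n \<and> j \<in> {1..n} \<and> j \<noteq> i \<and> j \<noteq> Suc i}
   \<union> \<comment> \<open>relations involving s_n\<close>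
     {lincomb [(1, [S n, Cl n]), (1, [Cl n, S n])]}
   \<union> {lincomb [(1, [S n, Cl i]), (-1, [Cl i, S n])] | i. i \<in> {1..n} \<and> i \<noteq> n}
   \<union> {lincomb [(1, [S n, X n]), (1, [X n, S n]), (complex_of_real (sqrt 2) * v, [])]}
   \<union> {lincomb [(1, [S n, X i]), (-1, [X i, S n])] | i. i \<in> {1..n} \<and> i \<noteq> n}"

text \<open>Generators (as a linear span) of the two-sided ideal generated by the relations.\<close>
definition ideal_gens :: "nat \<Rightarrow> complex \<Rightarrow> complex \<Rightarrow> fa set" where
  "ideal_gens n u v = {fmul (fmul (mono a) r) (mono b) | a b r.
                         valid_word n a \<and> valid_word n b \<and> r \<in> rels n u v}"

definition commutators :: "nat \<Rightarrow> fa set" where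
  "commutators n = {(\<lambda>w. fmul f g w - fmul g f w) | f g. in_free n f \<and> in_free n g}"

text \<open>The image of f in H^c_{B_n} lies in [H,H] iff f lies in the span of commutators of
  the free algebra plus the ideal of relations.\<close>
definition in_commutator_space :: "nat \<Rightarrow> complex \<Rightarrow> complex \<Rightarrow> fa \<Rightarrow> bool" where
  "in_commutator_space n u v f \<longleftrightarrow> f \<in> lspan (commutators n \<union> ideal_gens n u v)"

definition signed_perms :: "nat \<Rightarrow> (int \<Rightarrow> int) set" where
  "signed_perms n = {w. bij_betw w {k. k \<noteq> 0 \<and> \<bar>k\<bar> \<le> int n} {k. k \<noteq> 0 \<and> \<bar>k\<bar> \<le> int n}
                       \<and> (\<forall>k. w (- k) = - w k) \<and> (\<forall>k. \<bar>k\<bar> > int n \<longrightarrow> w k = k)}"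

definition sgen :: "nat \<Rightarrow> nat \<Rightarrow> int \<Rightarrow> int" where
  "sgen n i = (if i < n then
                 (\<lambda>k. if \<bar>k\<bar> = int i then sgn k * int (Suc i)
                      else if \<bar>k\<bar> = int (Suc i) then sgn k * int i else k)
               else (\<lambda>k. if \<bar>k\<bar> = int n then - k else k))"

definition word_to_perm :: "nat \<Rightarrow> nat list \<Rightarrow> int \<Rightarrow> int" where
  "word_to_perm n ws = foldr (\<lambda>i f. sgen n i \<circ> f) ws id"

definition underlying :: "(int \<Rightarrow> int) \<Rightarrow> nat \<Rightarrow> nat" where
  "underlying w i = nat \<bar>w (int i)\<bar>"

definition cyc :: "nat \<Rightarrow> (int \<Rightarrow> int) \<Rightarrow> nat \<Rightarrow> nat set" where
  "cyc n w i = {j \<in> {1..n}. \<exists>k. (underlying w ^^ k) i = j}"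

definition cycles :: "nat \<Rightarrow> (int \<Rightarrow> int) \<Rightarrow> nat set set" where
  "cycles n w = cyc n w ` {1..n}"

definition nsigns :: "(int \<Rightarrow> int) \<Rightarrow> nat set \<Rightarrow> nat" where
  "nsigns w cy = card {i \<in> cy. w (int i) < 0}"

definition sct_lambda :: "nat \<Rightarrow> (int \<Rightarrow> int) \<Rightarrow> nat multiset" where
  "sct_lambda n w = image_mset card (mset_set {cy \<in> cycles n w. even (nsigns w cy)})"

definition sct_mu :: "nat \<Rightarrow> (int \<Rightarrow> int) \<Rightarrow> nat multiset" where
  "sct_mu n w = image_mset card (mset_set {cy \<in> cycles n w. odd (nsigns w cy)})"

end

theory Submission
  imports Defs "HOL-Combinatorics.Cycles"
begin

text \<open>Pick a cycle \<open>(i\<^sub>1 \<dots> i\<^sub>k)\<close> of \<open>w\<close> along which the number of sign changes has the same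
  parity as \<open>k\<close>; the hypothesis on the signed cycle type says exactly that such a cycle exists.
  Put \<open>c = c\<^sub>i\<^sub>1 \<cdots> c\<^sub>i\<^sub>k\<close> and \<open>c' = c\<^sub>i\<^sub>k \<cdots> c\<^sub>i\<^sub>1\<close>, so that \<open>c c' = c' c = 1\<close>.
  Moving \<open>c\<close> through \<open>w\<close> rotates its indices and picks up one sign per sign change, and rotating
  back costs \<open>(-1)\<^sup>k\<^sup>-\<^sup>1\<close>; hence \<open>c' w c = -w\<close>, and \<open>w = (w c \<cdot> c' - c' \<cdot> w c) / 2\<close> is a commutator
  modulo the defining relations.\<close>

lemma lspan_add: "x \<in> lspan A \<Longrightarrow> y \<in> lspan A \<Longrightarrow> (\<lambda>w. x w + y w) \<in> lspan A"
proof (induction x rule: lspan.induct)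
  case zero then show ?case by simp
next
  case (step x z c)
  have "(\<lambda>w. c * x w + (z w + y w)) \<in> lspan A" using step by (intro lspan.step) auto
  then show ?case by (simp add: add.assoc)
qed

lemma lspan_scale: "x \<in> lspan A \<Longrightarrow> (\<lambda>w. d * x w) \<in> lspan A"
proof (induction x rule: lspan.induct)
  case zero then show ?case by (simp add: lspan.zero)
next
  case (step x z c)
  have "(\<lambda>w. (d * c) * x w + d * z w) \<in> lspan A" using step by (intro lspan.step) auto
  then show ?case by (simp add: algebra_simps)
qed

lemma lspan_base: "x \<in> A \<Longrightarrow> x \<in> lspan A"
  using lspan.step[of x A "\<lambda>_. 0" 1] lspan.zero by simp

lemma lspan_mono: "x \<in> lspan A \<Longrightarrow> A \<subseteq> B \<Longrightarrow> x \<in> lspan B"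
  by (induction x rule: lspan.induct) (auto intro: lspan.intros)

lemma fmul_mono_mono: "fmul (mono p) (mono q) = mono (p @ q)"
proof
  fix w
  have split: "(take i w = p \<and> drop i w = q) \<longleftrightarrow> (i = length p \<and> w = p @ q)" if "i \<le> length w" for i
    using that by (metis append_eq_conv_conj length_take min_absorb2)
  have "fmul (mono p) (mono q) w = (\<Sum>i = 0..length w. if i = length p \<and> w = p @ q then 1 else 0)"
    unfolding fmul_def mono_def by (intro sum.cong) (auto simp: split[symmetric])
  also have "\<dots> = mono (p @ q) w"
    unfolding mono_def by (auto simp: sum.delta')
  finally show "fmul (mono p) (mono q) w = mono (p @ q) w" .
qed

lemma fmul_add_scale_right: "fmul f (\<lambda>w. g w + c * h w) = (\<lambda>w. fmul f g w + c * fmul f h w)"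
  unfolding fmul_def by (simp add: algebra_simps sum.distrib sum_distrib_left)

lemma fmul_add_scale_left: "fmul (\<lambda>w. g w + c * h w) f = (\<lambda>w. fmul g f w + c * fmul h f w)"
  unfolding fmul_def by (simp add: algebra_simps sum.distrib sum_distrib_left)

lemma lincomb_pair: "lincomb [(1, p), (c, q)] = (\<lambda>w. mono p w + c * mono q w)"
  unfolding lincomb_def mono_def by (auto simp: fun_eq_iff)

lemma valid_word_append [simp]: "valid_word n (a @ b) \<longleftrightarrow> valid_word n a \<and> valid_word n b"
  and valid_word_Cons [simp]: "valid_word n (g # b) \<longleftrightarrow> valid_gen n g \<and> valid_word n b"
  and valid_word_Nil [simp]: "valid_word n []"
  by (auto simp: valid_word_def)

lemma valid_gen_Cl [simp]: "valid_gen n (Cl i) \<longleftrightarrow> 1 \<le> i \<and> i \<le> n"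
  and valid_gen_S [simp]: "valid_gen n (S i) \<longleftrightarrow> 1 \<le> i \<and> i \<le> n"
  by (auto simp: valid_gen_def)

lemma valid_word_map_S: "set ws \<subseteq> {1..n} \<Longrightarrow> valid_word n (map S ws)"
  and valid_word_map_Cl: "set ws \<subseteq> {1..n} \<Longrightarrow> valid_word n (map Cl ws)"
  by (auto simp: valid_word_def)

lemma in_free_mono: "valid_word n p \<Longrightarrow> in_free n (mono p)"
  unfolding in_free_def mono_def by simp

definition congruent_mod_rels ::
    "nat \<Rightarrow> complex \<Rightarrow> complex \<Rightarrow> gen list \<Rightarrow> complex \<Rightarrow> gen list \<Rightarrow> bool" where
  "congruent_mod_rels n u v p c q \<longleftrightarrow>
     (\<lambda>w. mono p w - c * mono q w) \<in> lspan (ideal_gens n u v)"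

lemma congruent_mod_rels_refl: "congruent_mod_rels n u v p 1 p"
  unfolding congruent_mod_rels_def using lspan.zero by simp

lemma congruent_mod_rels_trans:
  assumes "congruent_mod_rels n u v p c q" "congruent_mod_rels n u v q d r"
  shows "congruent_mod_rels n u v p (c * d) r"
proof -
  have "(\<lambda>w. (mono p w - c * mono q w) + c * (mono q w - d * mono r w)) \<in> lspan (ideal_gens n u v)"
    using assms unfolding congruent_mod_rels_def by (intro lspan_add lspan_scale)
  then show ?thesis
    unfolding congruent_mod_rels_def by (simp add: algebra_simps)
qed

lemma congruent_mod_rels_of_rel:
  assumes "lincomb [(1, p), (c, q)] \<in> rels n u v" "valid_word n a" "valid_word n b"
  shows "congruent_mod_rels n u v (a @ p @ b) (- c) (a @ q @ b)"
proof -
  have "fmul (fmul (mono a) (lincomb [(1, p), (c, q)])) (mono b) \<in> ideal_gens n u v"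
    unfolding ideal_gens_def using assms by blast
  moreover have "fmul (fmul (mono a) (lincomb [(1, p), (c, q)])) (mono b)
      = (\<lambda>w. mono (a @ p @ b) w - (- c) * mono (a @ q @ b) w)"
    unfolding lincomb_pair fmul_add_scale_right fmul_add_scale_left fmul_mono_mono by simp
  ultimately show ?thesis
    unfolding congruent_mod_rels_def by (metis lspan_base)
qed

lemma congruent_Cl_square:
  assumes "i \<in> {1..n}" "valid_word n a" "valid_word n b"
  shows "congruent_mod_rels n u v (a @ [Cl i, Cl i] @ b) 1 (a @ b)"
proof -
  have "lincomb [(1, [Cl i, Cl i]), (-1, [])] \<in> rels n u v"
    using assms(1) unfolding rels_def Un_iff mem_Collect_eq singleton_iff by metis
  from congruent_mod_rels_of_rel[OF this assms(2,3)] show ?thesis by simp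
qed

lemma congruent_Cl_anticommute:
  assumes "i \<in> {1..n}" "j \<in> {1..n}" "i \<noteq> j" "valid_word n a" "valid_word n b"
  shows "congruent_mod_rels n u v (a @ [Cl i, Cl j] @ b) (-1) (a @ [Cl j, Cl i] @ b)"
proof -
  have "lincomb [(1, [Cl i, Cl j]), (1, [Cl j, Cl i])] \<in> rels n u v"
    using assms(1-3) unfolding rels_def Un_iff mem_Collect_eq singleton_iff by metis
  from congruent_mod_rels_of_rel[OF this assms(4,5)] show ?thesis by simp
qed

lemma congruent_Cl_rev_self:
  assumes "set L \<subseteq> {1..n}" "valid_word n a" "valid_word n b"
  shows "congruent_mod_rels n u v (a @ map Cl (rev L) @ map Cl L @ b) 1 (a @ b)"
  using assms(1)
proof (induction L)
  case Nil
  then show ?case by (simp add: congruent_mod_rels_refl)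
next
  case (Cons x L)
  then have "congruent_mod_rels n u v (a @ map Cl (rev (x # L)) @ map Cl (x # L) @ b) 1
      (a @ map Cl (rev L) @ map Cl L @ b)"
    using congruent_Cl_square[of x n "a @ map Cl (rev L)" "map Cl L @ b"] assms(2,3)
    by (simp add: valid_word_map_Cl)
  from congruent_mod_rels_trans[OF this Cons.IH] Cons.prems show ?case by simp
qed

lemma congruent_Cl_list_Cl:
  assumes "x \<in> {1..n}" "x \<notin> set L" "set L \<subseteq> {1..n}" "valid_word n a" "valid_word n b"
  shows "congruent_mod_rels n u v (a @ map Cl L @ [Cl x] @ b) ((-1) ^ length L) (a @ [Cl x] @ map Cl L @ b)"
  using assms(2-4)
proof (induction L arbitrary: a)
  case Nil
  then show ?case by (simp add: congruent_mod_rels_refl)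
next
  case (Cons y L)
  then have "congruent_mod_rels n u v (a @ map Cl (y # L) @ [Cl x] @ b) ((-1) ^ length L)
      (a @ [Cl y, Cl x] @ (map Cl L @ b))"
    using Cons.IH[of "a @ [Cl y]"] by simp
  moreover have "congruent_mod_rels n u v (a @ [Cl y, Cl x] @ (map Cl L @ b)) (-1)
      (a @ [Cl x] @ map Cl (y # L) @ b)"
    using Cons.prems assms(1,5) congruent_Cl_anticommute[of y n x a "map Cl L @ b"]
    by (auto simp: valid_word_map_Cl)
  ultimately show ?case
    using congruent_mod_rels_trans by fastforce
qed

lemma sgen_uminus: "sgen n i (- k) = - sgen n i k"
  unfolding sgen_def by (auto simp: sgn_if)

lemma sgen_mult_unit: "\<sigma> \<in> {1, -1} \<Longrightarrow> sgen n i (\<sigma> * k) = \<sigma> * sgen n i k"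
  using sgen_uminus by auto

lemma rels_S_Cl:
  assumes "i \<in> {1..n}" "j \<in> {1..n}"
  obtains \<sigma> j' where "\<sigma> \<in> {1, -1}" "j' \<in> {1..n}" "sgen n i (int j) = \<sigma> * int j'"
    "lincomb [(1, [S i, Cl j]), (- of_int \<sigma>, [Cl j', S i])] \<in> rels n u v"
proof -
  have "1 \<le> i" using assms(1) by simp
  consider "i < n" "j = i" | "i < n" "j = Suc i" | "i < n" "j \<noteq> i" "j \<noteq> Suc i"
    | "i = n" "j = n" | "i = n" "j \<noteq> n"
    using assms by fastforce
  then show thesis
  proof cases
    case 1
    with \<open>1 \<le> i\<close> have "lincomb [(1, [S i, Cl i]), (-1, [Cl (Suc i), S i])] \<in> rels n u v"
      unfolding rels_def Un_iff mem_Collect_eq singleton_iff by metis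
    with 1 assms show thesis by (intro that[of 1 "Suc i"]) (auto simp: sgen_def)
  next
    case 2
    with \<open>1 \<le> i\<close> have "lincomb [(1, [S i, Cl (Suc i)]), (-1, [Cl i, S i])] \<in> rels n u v"
      unfolding rels_def Un_iff mem_Collect_eq singleton_iff by metis
    with 2 assms show thesis by (intro that[of 1 i]) (auto simp: sgen_def)
  next
    case 3
    with \<open>1 \<le> i\<close> have "lincomb [(1, [S i, Cl j]), (-1, [Cl j, S i])] \<in> rels n u v"
      using assms(2) unfolding rels_def Un_iff mem_Collect_eq singleton_iff by metis
    with 3 assms show thesis by (intro that[of 1 j]) (auto simp: sgen_def)
  next
    case 4
    have "lincomb [(1, [S n, Cl n]), (1, [Cl n, S n])] \<in> rels n u v"
      unfolding rels_def Un_iff singleton_iff by simp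
    with 4 assms show thesis by (intro that[of "-1" n]) (auto simp: sgen_def)
  next
    case 5
    then have "lincomb [(1, [S n, Cl j]), (-1, [Cl j, S n])] \<in> rels n u v"
      using assms(2) unfolding rels_def Un_iff mem_Collect_eq singleton_iff by metis
    with 5 assms show thesis by (intro that[of 1 j]) (auto simp: sgen_def)
  qed
qed

lemma congruent_word_Cl:
  assumes "set ws \<subseteq> {1..n}" "j \<in> {1..n}" "valid_word n a" "valid_word n b"
  shows "\<exists>\<sigma> j'. \<sigma> \<in> {1, -1} \<and> j' \<in> {1..n} \<and> word_to_perm n ws (int j) = \<sigma> * int j' \<and>
    congruent_mod_rels n u v (a @ map S ws @ [Cl j] @ b) (of_int \<sigma>) (a @ [Cl j'] @ map S ws @ b)"
  using assms(1,3)
proof (induction ws arbitrary: a)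
  case Nil
  then show ?case
    using assms(2) by (intro exI[of _ 1] exI[of _ j]) (simp add: word_to_perm_def congruent_mod_rels_refl)
next
  case (Cons i ws)
  then have i: "i \<in> {1..n}" and ws: "set ws \<subseteq> {1..n}" by auto
  obtain \<sigma>\<^sub>1 j\<^sub>1 where \<sigma>\<^sub>1: "\<sigma>\<^sub>1 \<in> {1, -1}" and j\<^sub>1: "j\<^sub>1 \<in> {1..n}"
    and w1: "word_to_perm n ws (int j) = \<sigma>\<^sub>1 * int j\<^sub>1"
    and c1: "congruent_mod_rels n u v (a @ map S (i # ws) @ [Cl j] @ b) (of_int \<sigma>\<^sub>1)
               (a @ [S i, Cl j\<^sub>1] @ (map S ws @ b))"
    using Cons.IH[of "a @ [S i]"] Cons.prems i ws by auto
  obtain \<sigma>\<^sub>2 j\<^sub>2 where \<sigma>\<^sub>2: "\<sigma>\<^sub>2 \<in> {1, -1}" and j\<^sub>2: "j\<^sub>2 \<in> {1..n}"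
    and s2: "sgen n i (int j\<^sub>1) = \<sigma>\<^sub>2 * int j\<^sub>2"
    and r2: "lincomb [(1, [S i, Cl j\<^sub>1]), (- of_int \<sigma>\<^sub>2, [Cl j\<^sub>2, S i])] \<in> rels n u v"
    using rels_S_Cl[OF i j\<^sub>1] by metis
  have "congruent_mod_rels n u v (a @ [S i, Cl j\<^sub>1] @ (map S ws @ b)) (of_int \<sigma>\<^sub>2)
      (a @ [Cl j\<^sub>2] @ map S (i # ws) @ b)"
    using congruent_mod_rels_of_rel[OF r2, of a "map S ws @ b"] Cons.prems assms(4) ws
    by (simp add: valid_word_map_S)
  moreover have "word_to_perm n (i # ws) (int j) = (\<sigma>\<^sub>1 * \<sigma>\<^sub>2) * int j\<^sub>2"
    using w1 s2 \<sigma>\<^sub>1 by (simp add: word_to_perm_def sgen_mult_unit)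
  ultimately show ?case
    using congruent_mod_rels_trans[OF c1] \<sigma>\<^sub>1 \<sigma>\<^sub>2 j\<^sub>2
    by (intro exI[of _ "\<sigma>\<^sub>1 * \<sigma>\<^sub>2"] exI[of _ j\<^sub>2]) auto
qed

lemma congruent_word_Cl_list:
  assumes "set ws \<subseteq> {1..n}" "set L \<subseteq> {1..n}" "valid_word n a" "valid_word n b"
  shows "congruent_mod_rels n u v (a @ map S ws @ map Cl L @ b)
           (\<Prod>x\<leftarrow>L. of_int (sgn (word_to_perm n ws (int x))))
           (a @ map Cl (map (underlying (word_to_perm n ws)) L) @ map S ws @ b)"
  using assms(2,3)
proof (induction L arbitrary: a)
  case Nil
  then show ?case by (simp add: congruent_mod_rels_refl)
next
  case (Cons x L)
  then have x: "x \<in> {1..n}" and L: "set L \<subseteq> {1..n}" by auto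
  obtain \<sigma> x' where \<sigma>: "\<sigma> \<in> {1, -1}" and x': "x' \<in> {1..n}"
    and wx: "word_to_perm n ws (int x) = \<sigma> * int x'"
    and c: "congruent_mod_rels n u v (a @ map S ws @ [Cl x] @ (map Cl L @ b)) (of_int \<sigma>)
              ((a @ [Cl x']) @ map S ws @ map Cl L @ b)"
    using congruent_word_Cl[OF assms(1) x Cons.prems(2), where b="map Cl L @ b" and u=u and v=v] assms(4) L
    by (auto simp: valid_word_map_Cl)
  have "sgn (word_to_perm n ws (int x)) = \<sigma>" "underlying (word_to_perm n ws) x = x'"
    using \<sigma> x' wx by (auto simp: underlying_def abs_mult)
  then show ?case
    using congruent_mod_rels_trans[OF c Cons.IH[OF L, of "a @ [Cl x']"]] Cons.prems(2) x' by simp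
qed

lemma in_commutator_space_of_anticommuting:
  assumes "valid_word n t" "valid_word n c" "valid_word n c'"
    and "congruent_mod_rels n u v (t @ c @ c') 1 t"
    and "congruent_mod_rels n u v (c' @ t @ c) (-1) t"
  shows "in_commutator_space n u v (mono t)"
proof -
  let ?I = "lspan (commutators n \<union> ideal_gens n u v)"
  have "(\<lambda>w. fmul (mono (t @ c)) (mono c') w - fmul (mono c') (mono (t @ c)) w) \<in> commutators n"
    unfolding commutators_def using assms(1-3) in_free_mono[of n "t @ c"] in_free_mono[of n c'] by auto
  then have comm: "(\<lambda>w. mono (t @ c @ c') w - mono (c' @ t @ c) w) \<in> ?I"
    unfolding fmul_mono_mono by (auto intro: lspan_base)
  have ideal: "(\<lambda>w. mono (t @ c @ c') w - 1 * mono t w) \<in> ?I"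
    "(\<lambda>w. mono (c' @ t @ c) w - (-1) * mono t w) \<in> ?I"
    using assms(4,5) unfolding congruent_mod_rels_def by (auto elim: lspan_mono)
  have "(\<lambda>w. (1/2) * (mono (t @ c @ c') w - mono (c' @ t @ c) w) +
      ((-1/2) * (mono (t @ c @ c') w - 1 * mono t w) +
       (1/2) * (mono (c' @ t @ c) w - (-1) * mono t w))) \<in> ?I"
    using comm ideal by (intro lspan_add lspan_scale)
  moreover have "(\<lambda>w. (1/2) * (mono (t @ c @ c') w - mono (c' @ t @ c) w) +
      ((-1/2) * (mono (t @ c @ c') w - 1 * mono t w) +
       (1/2) * (mono (c' @ t @ c) w - (-1) * mono t w))) = mono t"
    by (auto simp: fun_eq_iff algebra_simps)
  ultimately show ?thesis
    unfolding in_commutator_space_def by simp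
qed

lemma in_commutator_space_of_cycle:
  assumes ws: "set ws \<subseteq> {1..n}"
    and L: "L \<noteq> []" "distinct L" "set L \<subseteq> {1..n}"
    and rot: "map (underlying (word_to_perm n ws)) L = rotate1 L"
    and sign: "(\<Prod>x\<leftarrow>L. of_int (sgn (word_to_perm n ws (int x)))) = ((-1) ^ length L :: complex)"
  shows "in_commutator_space n u v (mono (map S ws))"
proof -
  let ?t = "map S ws" and ?c = "map Cl L" and ?c' = "map Cl (rev L)"
  have valid: "valid_word n ?t" "valid_word n ?c" "valid_word n ?c'"
    using ws L(3) by (auto simp: valid_word_map_S valid_word_map_Cl)
  obtain x L' where xL: "L = x # L'" using L(1) by (cases L) auto
  have "congruent_mod_rels n u v (?c' @ ?t @ ?c) ((-1) ^ length L) (?c' @ map Cl L' @ [Cl x] @ ?t)"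
    using congruent_word_Cl_list[OF ws L(3) valid(3) valid_word_Nil, where u=u and v=v, unfolded rot sign]
      xL by simp
  moreover have "congruent_mod_rels n u v (?c' @ map Cl L' @ [Cl x] @ ?t) ((-1) ^ length L') (?c' @ ?c @ ?t)"
    using congruent_Cl_list_Cl[of x n L' ?c' ?t] L valid xL by simp
  moreover have "congruent_mod_rels n u v (?c' @ ?c @ ?t) 1 ?t"
    using congruent_Cl_rev_self[OF L(3) valid_word_Nil valid(1)] by simp
  ultimately have "congruent_mod_rels n u v (?c' @ ?t @ ?c) ((-1) ^ length L * (-1) ^ length L' * 1) ?t"
    by (blast intro: congruent_mod_rels_trans)
  then have "congruent_mod_rels n u v (?c' @ ?t @ ?c) (-1) ?t"
    using xL by simp
  moreover have "congruent_mod_rels n u v (?t @ ?c @ ?c') 1 ?t"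
    using congruent_Cl_rev_self[of "rev L" n ?t "[]"] L(3) valid(1) by simp
  ultimately show ?thesis
    using in_commutator_space_of_anticommuting[OF valid] by blast
qed

lemma signed_perm_nonzero_bounded:
  "w \<in> signed_perms n \<Longrightarrow> i \<in> {1..n} \<Longrightarrow> w (int i) \<noteq> 0 \<and> \<bar>w (int i)\<bar> \<le> int n"
  unfolding signed_perms_def by (auto dest: bij_betwE)

lemma underlying_permutes:
  assumes "w \<in> signed_perms n"
  shows "underlying w permutes {1..n}"
proof -
  let ?N = "{k::int. k \<noteq> 0 \<and> \<bar>k\<bar> \<le> int n}"
  have bij: "bij_betw w ?N ?N" and odd: "\<And>k. w (- k) = - w k" and id_outside: "\<And>k. \<bar>k\<bar> > int n \<Longrightarrow> w k = k"
    using assms unfolding signed_perms_def by auto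
  have maps: "underlying w ` {1..n} \<subseteq> {1..n}"
    using signed_perm_nonzero_bounded[OF assms] by (force simp: underlying_def)
  have "inj_on (underlying w) {1..n}"
  proof (rule inj_onI)
    fix a b assume a: "a \<in> {1..n}" and b: "b \<in> {1..n}" and eq: "underlying w a = underlying w b"
    then have "w (int a) = w (int b) \<or> w (int a) = w (- int b)"
      using odd[of "int b"] by (auto simp: underlying_def abs_eq_iff)
    moreover have "int a \<in> ?N" "int b \<in> ?N" "- int b \<in> ?N"
      using a b by auto
    ultimately have "int a = int b \<or> int a = - int b"
      using bij_betw_imp_inj_on[OF bij] unfolding inj_on_def by blast
    then show "a = b" using a b by auto
  qed
  with maps have "bij_betw (underlying w) {1..n} {1..n}"
    by (simp add: bij_betw_def endo_inj_surj)
  moreover have "underlying w i = i" if "i \<notin> {1..n}" for i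
    using that id_outside[of "int i"] odd[of 0] by (cases "i = 0") (auto simp: underlying_def)
  ultimately show ?thesis
    by (rule bij_imp_permutes)
qed

lemma map_support_eq_rotate1:
  assumes "permutation p"
  shows "map p (support p x) = rotate1 (support p x)"
proof (rule nth_equalityI)
  fix k assume "k < length (map p (support p x))"
  then have k: "k < least_power p x" by simp
  have "(p ^^ (Suc k mod least_power p x)) x = (p ^^ Suc k) x"
  proof (cases "Suc k < least_power p x")
    case False
    then have "Suc k = least_power p x" using k by simp
    then show ?thesis using least_power_of_permutation(1)[OF assms, of x] by simp
  qed simp
  then show "map p (support p x) ! k = rotate1 (support p x) ! k"
    using k by (simp add: nth_rotate1)
qed simp

lemma prod_sgn_eq_power_card_neg:
  assumes "distinct L" "\<forall>x\<in>set L. w (int x) \<noteq> 0"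
  shows "(\<Prod>x\<leftarrow>L. (of_int (sgn (w (int x))) :: complex)) = (-1) ^ card {x \<in> set L. w (int x) < 0}"
proof -
  have "(\<Prod>x\<leftarrow>L. (of_int (sgn (w (int x))) :: complex)) = (\<Prod>x\<in>set L. if w (int x) < 0 then -1 else 1)"
    using assms by (auto simp: prod.distinct_set_conv_list[symmetric] sgn_if intro!: prod.cong)
  also have "\<dots> = (-1) ^ card {x \<in> set L. w (int x) < 0}"
    by (simp add: prod.If_cases Int_def)
  finally show ?thesis .
qed

lemma cyc_eq_set_of_rotated_list:
  assumes "w \<in> signed_perms n" "i \<in> {1..n}"
  obtains L where "L \<noteq> []" "distinct L" "set L = cyc n w i" "map (underlying w) L = rotate1 L"
proof -
  have perm: "underlying w permutes {1..n}"
    using underlying_permutes[OF assms(1)] .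
  then have p: "permutation (underlying w)"
    by (rule permutes_imp_permutation[rotated]) simp
  have "set (support (underlying w) i) = range (\<lambda>k. (underlying w ^^ k) i)"
    by (rule support_set[OF p])
  moreover have "(underlying w ^^ k) i \<in> {1..n}" for k
    using permutes_in_image[OF permutes_funpow[OF perm]] assms(2) by simp
  ultimately have "set (support (underlying w) i) = cyc n w i"
    unfolding cyc_def by auto
  moreover have "support (underlying w) i \<noteq> []"
    using least_power_of_permutation(2)[OF p, of i] by simp
  ultimately show thesis
    using that cycle_of_permutation[OF p] map_support_eq_rotate1[OF p] by blast
qed

theorem proposition3p4p1:
  fixes n :: nat and u v :: complex and w :: "int \<Rightarrow> int"
  assumes "2 \<le> n"
    and "w \<in> signed_perms n"
    and "\<not> ((\<forall>l \<in># sct_lambda n w. odd l) \<and> (\<forall>m \<in># sct_mu n w. even m))"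
  shows "\<forall>ws. set ws \<subseteq> {1..n} \<longrightarrow> word_to_perm n ws = w \<longrightarrow>
           in_commutator_space n u v (mono (map S ws))"
proof (intro allI impI)
  fix ws assume ws: "set ws \<subseteq> {1..n}" and wp: "word_to_perm n ws = w"
  obtain cy where "cy \<in> cycles n w" and par: "even (nsigns w cy + card cy)"
    using assms(3) unfolding sct_lambda_def sct_mu_def cycles_def by auto
  then obtain i where "i \<in> {1..n}" and cy: "cy = cyc n w i"
    unfolding cycles_def by auto
  then obtain L where L: "L \<noteq> []" "distinct L" "cy = set L" "map (underlying w) L = rotate1 L"
    using cyc_eq_set_of_rotated_list[OF assms(2)] by metis
  then have "set L \<subseteq> {1..n}"
    using cy by (auto simp: cyc_def)
  then have "\<forall>x\<in>set L. w (int x) \<noteq> 0"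
    using signed_perm_nonzero_bounded[OF assms(2)] by blast
  then have "(\<Prod>x\<leftarrow>L. of_int (sgn (w (int x)))) = ((-1) ^ nsigns w cy :: complex)"
    unfolding nsigns_def L(3) by (rule prod_sgn_eq_power_card_neg[OF L(2)])
  also have "\<dots> = (-1) ^ length L"
    using par L(3) distinct_card[OF L(2)] by (simp add: minus_one_power_iff)
  finally show "in_commutator_space n u v (mono (map S ws))"
    using in_commutator_space_of_cycle[OF ws L(1,2) \<open>set L \<subseteq> {1..n}\<close>] L(4) wp by simp
qed

end
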